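(* Let $\mathscr H$ be a Hilbert module over $A=M_d(\mathbb C)$. If $S\in\mathscr F(\mathscr H)$ is self-adjoint (with respect to the Hilbert space inner product $\operatorname{tr}[\cdot,\cdot]$), then there exist $\lambda_1,\dots,\lambda_n\in\mathbb R$ and a modular orthonormal family $\{f_1,\dots,f_n\}\subset\mathscr H$ such that $S=\sum_{k=1}^n\lambda_k\, f_k\odot f_k$.
   Context: A Hilbert module over $A=M_d(\mathbb C)$ is a left $A$-module $\mathscr H$ with a map $[\cdot,\cdot]:\mathscr H\times\mathscr H\to A$ such that for all $f,g,h\in\mathscr H$, $a\in A$: $[f+g,h]=[f,h]+[g,h]$; $[af,g]=a[f,g]$; $[g,f]=[f,g]^*$; $[f,f]\ge0$, and $[f,f]=0$ iff $f=0$; and $\mathscr H$ is complete in the norm $f\mapsto\|[f,f]\|^{1/2}$ (equivalently, $\mathscr H$ is a Hilbert space with inner product $\operatorname{tr}[f,g]$). For $f,g\in\mathscr H$, $f\odot g$ is the operator $h\mapsto[h,g]f$, and $\mathscr F(\mathscr H)=\{\sum_{k=1}^n f_k\odot g_k: n\in\mathbb N,\ f_k,g_k\in\mathscr H\}$. A family $\{f_k\}\subset\mathscr H$ is modular orthonormal if $[f_j,f_k]=0$ for $j\ne k$ and each $[f_k,f_k]$ is a minimal (rank-one) projection in $A$. *)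

theory Defs
  imports "HOL-Analysis.Analysis"
begin

text \<open>Matrices in A = M_d(C) are represented as complex^'d^'d with 'd a finite type
 of cardinality d. Matrix product is **, identity is mat 1.\<close>

definition cstar :: "complex^'d^'d \<Rightarrow> complex^'d^'d" where
  "cstar a = (\<chi> i j. cnj (a $ j $ i))"

definition mat_pos :: "complex^'d^'d \<Rightarrow> bool" where
  "mat_pos a \<longleftrightarrow> (\<forall>x::complex^'d.
     Im (\<Sum>i\<in>UNIV. cnj (x $ i) * (a *v x) $ i) = 0 \<and>
     Re (\<Sum>i\<in>UNIV. cnj (x $ i) * (a *v x) $ i) \<ge> 0)"

definition mat_projection :: "complex^'d^'d \<Rightarrow> bool" where
  "mat_projection p \<longleftrightarrow> p ** p = p \<and> cstar p = p"

text \<open>Minimal projection: a nonzero projection with no projection strictly between 0 and it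
 (for projections, q \<le> p iff q ** p = q).\<close>
definition minimal_projection :: "complex^'d^'d \<Rightarrow> bool" where
  "minimal_projection p \<longleftrightarrow> mat_projection p \<and> p \<noteq> 0 \<and>
     (\<forall>q. mat_projection q \<and> q ** p = q \<longrightarrow> q = 0 \<or> q = p)"

text \<open>Hilbert module over M_d(C): left module (action act) with A-valued inner product ip.
 Completeness is stated w.r.t. the Hilbert space norm sqrt(tr[f,f]) (equivalent, as noted).\<close>
definition hilbert_module ::
  "(complex^'d^'d \<Rightarrow> 'h::ab_group_add \<Rightarrow> 'h) \<Rightarrow> ('h \<Rightarrow> 'h \<Rightarrow> complex^'d^'d) \<Rightarrow> bool" where
  "hilbert_module act ip \<longleftrightarrow>
     (\<forall>a b f. act (a ** b) f = act a (act b f)) \<and>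
     (\<forall>a b f. act (a + b) f = act a f + act b f) \<and>
     (\<forall>a f g. act a (f + g) = act a f + act a g) \<and>
     (\<forall>f. act (mat 1) f = f) \<and>
     (\<forall>f g h. ip (f + g) h = ip f h + ip g h) \<and>
     (\<forall>a f g. ip (act a f) g = a ** ip f g) \<and>
     (\<forall>f g. ip g f = cstar (ip f g)) \<and>
     (\<forall>f. mat_pos (ip f f)) \<and>
     (\<forall>f. ip f f = 0 \<longleftrightarrow> f = 0) \<and>
     (\<forall>X :: nat \<Rightarrow> 'h.
        (\<forall>e>0. \<exists>N. \<forall>m\<ge>N. \<forall>n\<ge>N. sqrt (Re (trace (ip (X m - X n) (X m - X n)))) < e) \<longrightarrow>
        (\<exists>L. \<forall>e>0. \<exists>N. \<forall>n\<ge>N. sqrt (Re (trace (ip (X n - L) (X n - L)))) < e))"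

definition odot :: "(complex^'d^'d \<Rightarrow> 'h \<Rightarrow> 'h) \<Rightarrow> ('h \<Rightarrow> 'h \<Rightarrow> complex^'d^'d) \<Rightarrow> 'h \<Rightarrow> 'h \<Rightarrow> 'h \<Rightarrow> 'h" where
  "odot act ip f g = (\<lambda>h. act (ip h g) f)"

definition finite_rank_ops ::
  "(complex^'d^'d \<Rightarrow> 'h::ab_group_add \<Rightarrow> 'h) \<Rightarrow> ('h \<Rightarrow> 'h \<Rightarrow> complex^'d^'d) \<Rightarrow> ('h \<Rightarrow> 'h) set" where
  "finite_rank_ops act ip = {S. \<exists>(n::nat) (fs::nat \<Rightarrow> 'h) gs.
      S = (\<lambda>h. \<Sum>k<n. odot act ip (fs k) (gs k) h)}"

definition modular_orthonormal ::
  "('h \<Rightarrow> 'h \<Rightarrow> complex^'d^'d) \<Rightarrow> nat \<Rightarrow> (nat \<Rightarrow> 'h) \<Rightarrow> bool" where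
  "modular_orthonormal ip n f \<longleftrightarrow>
     (\<forall>j<n. \<forall>k<n. j \<noteq> k \<longrightarrow> ip (f j) (f k) = 0) \<and>
     (\<forall>k<n. minimal_projection (ip (f k) (f k)))"

end

theory Submission
  imports Defs "HOL-Computational_Algebra.Fundamental_Theorem_Algebra"
begin

(* Every S in F(H) maps H into the submodule W generated by finitely many vectors, and W is a
   finite-dimensional complex vector space under the scalar matrices. Self-adjointness for the
   trace inner product upgrades to [S h, g] = [h, S g], which makes S additive and A-linear, so S
   restricts to a linear map of W. An annihilating polynomial and the fundamental theorem of
   algebra give an eigenvector, whose eigenvalue is real; compressing it by a matrix unit e_ii
   and rescaling yields an eigenvector f with [f, f] = e_ii. Then S - lambda f (.) f is again
   self-adjoint and maps into {y in W. [y, f] = 0}, which has smaller dimension than W, so the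
   decomposition follows by induction on dim W. *)

no_notation vector_scalar_mult (infixl \<open>*s\<close> 70)

definition poly_apply ::
    "('a::zero \<Rightarrow> 'b \<Rightarrow> 'b) \<Rightarrow> ('b \<Rightarrow> 'b) \<Rightarrow> 'a poly \<Rightarrow> 'b \<Rightarrow> 'b::comm_monoid_add" where
  "poly_apply sc T p y = (\<Sum>k\<le>degree p. sc (coeff p k) ((T ^^ k) y))"

context vector_space
begin

lemma dim_psubset_of_finite_span:
  assumes "subspace V" "V \<subset> W" "W \<subseteq> span B" "finite B"
  shows "dim V < dim W"
proof -
  obtain A where A: "A \<subseteq> V" "independent A" "V \<subseteq> span A" "card A = dim V"
    using basis_exists by blast
  obtain C where C: "C \<subseteq> W" "independent C" "W \<subseteq> span C" "card C = dim W"
    using basis_exists by blast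
  obtain x where x: "x \<in> W" "x \<notin> V"
    using assms(2) by blast
  have "span A \<subseteq> V"
    using A(1) assms(1) by (rule span_minimal)
  then have "independent (insert x A)"
    using x(2) A(2) by (intro independent_insertI) auto
  moreover have "insert x A \<subseteq> span C"
    using A(1) C(3) x(1) assms(2) by blast
  moreover have "finite C"
    using independent_span_bound[OF assms(4) C(2)] C(1) assms(3) by blast
  ultimately have "finite (insert x A) \<and> card (insert x A) \<le> card C"
    by (intro independent_span_bound)
  moreover have "x \<notin> A"
    using A(1) x(2) by blast
  ultimately show ?thesis
    using A(4) C(4) by auto
qed

lemma exists_nontrivial_linear_relation:
  assumes "v ` {..N} \<subseteq> span B" "finite B" "card B \<le> N"
  obtains c where "\<exists>k\<le>N. c k \<noteq> 0" "(\<Sum>k\<le>N. c k *s v k) = 0"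
proof (cases "inj_on v {..N}")
  case True
  have "dependent (v ` {..N})"
  proof (rule ccontr)
    assume "independent (v ` {..N})"
    then have "card (v ` {..N}) \<le> card B"
      using independent_span_bound[OF assms(2)] assms(1) by blast
    then show False
      using assms(3) card_image[OF True] by simp
  qed
  then obtain u where "\<exists>w\<in>v ` {..N}. u w \<noteq> 0" "(\<Sum>w\<in>v ` {..N}. u w *s w) = 0"
    using dependent_finite[of "v ` {..N}"] by blast
  then show ?thesis
    using that[of "u \<circ> v"] by (auto simp: sum.reindex[OF True])
next
  case False
  then obtain i j where ij: "i \<le> N" "j \<le> N" "i \<noteq> j" "v i = v j"
    unfolding inj_on_def by blast
  let ?c = "\<lambda>k. (if k = i then 1 else 0) - (if k = j then 1 else 0 :: 'a)"
  have "?c k *s v k = (if k = i then v k else 0) - (if k = j then v k else 0)" for k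
    by (simp add: scale_left_diff_distrib)
  then have "(\<Sum>k\<le>N. ?c k *s v k) = 0"
    using ij by (simp add: sum_subtractf)
  moreover have "?c i \<noteq> 0"
    using ij(3) by simp
  ultimately show ?thesis
    using that[of ?c] ij(1) by blast
qed

lemma poly_apply_altdef:
  assumes "degree p \<le> n"
  shows "poly_apply scale T p y = (\<Sum>k\<le>n. coeff p k *s (T ^^ k) y)"
  unfolding poly_apply_def
  by (rule sum.mono_neutral_left) (use assms in \<open>auto simp: coeff_eq_0\<close>)

lemma poly_apply_add:
  "poly_apply scale T (p + q) y = poly_apply scale T p y + poly_apply scale T q y"
proof -
  define n where "n = max (degree p) (degree q)"
  have "degree (p + q) \<le> n" "degree p \<le> n" "degree q \<le> n"
    unfolding n_def by (auto intro: degree_add_le_max)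
  then show ?thesis
    by (simp add: poly_apply_altdef scale_left_distrib sum.distrib)
qed

lemma poly_apply_smult: "poly_apply scale T (smult c p) y = c *s poly_apply scale T p y"
  by (simp add: poly_apply_altdef[of _ "degree p"] scale_sum_right)

lemma poly_apply_pCons_0: "poly_apply scale T (pCons 0 p) y = poly_apply scale T p (T y)"
proof -
  have "poly_apply scale T (pCons 0 p) y =
      (\<Sum>k\<le>Suc (degree p). coeff (pCons 0 p) k *s (T ^^ k) y)"
    by (rule poly_apply_altdef) simp
  also have "\<dots> = (\<Sum>k\<le>degree p. coeff p k *s (T ^^ k) (T y))"
    by (subst sum.atMost_Suc_shift) (simp add: funpow_Suc_right del: funpow.simps)
  finally show ?thesis
    by (simp add: poly_apply_def)
qed

lemma poly_apply_monom_sum: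
  "poly_apply scale T (\<Sum>k\<le>N. monom (c k) k) y = (\<Sum>k\<le>N. c k *s (T ^^ k) y)"
proof -
  have coeff: "coeff (\<Sum>k\<le>N. monom (c k) k) k = (if k \<le> N then c k else 0)" for k
    by (simp add: coeff_sum coeff_monom)
  then have "degree (\<Sum>k\<le>N. monom (c k) k) \<le> N"
    by (intro degree_le) simp
  then show ?thesis
    by (simp add: poly_apply_altdef coeff)
qed

lemma exists_annihilating_poly:
  assumes "\<And>k. (T ^^ k) y \<in> span B" "finite B"
  obtains p where "p \<noteq> 0" "poly_apply scale T p y = 0"
proof -
  obtain c where c: "\<exists>k\<le>card B. c k \<noteq> 0" "(\<Sum>k\<le>card B. c k *s (T ^^ k) y) = 0"
    using exists_nontrivial_linear_relation[of "\<lambda>k. (T ^^ k) y" "card B" B] assms by blast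
  define p where "p = (\<Sum>k\<le>card B. monom (c k) k)"
  have "p \<noteq> 0"
  proof -
    obtain k where "k \<le> card B" "c k \<noteq> 0"
      using c(1) by blast
    then have "coeff p k \<noteq> 0"
      by (simp add: p_def coeff_sum)
    then show ?thesis
      by auto
  qed
  moreover have "poly_apply scale T p y = 0"
    using c(2) by (simp add: p_def poly_apply_monom_sum)
  ultimately show ?thesis
    by (rule that)
qed

context
  fixes T :: "'b \<Rightarrow> 'b"
  assumes T_add: "\<And>u w. T (u + w) = T u + T w"
    and T_scale: "\<And>c u. T (c *s u) = c *s T u"
begin

lemma funpow_linear_diff: "(T ^^ k) (u - w) = (T ^^ k) u - (T ^^ k) w"
proof -
  have "T (u - w) = T u - T w" for u w
    using T_add[of "u - w" w] by (simp add: algebra_simps)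
  then show ?thesis
    by (induction k) auto
qed

lemma funpow_linear_scale: "(T ^^ k) (c *s u) = c *s (T ^^ k) u"
  by (induction k) (auto simp: T_scale)

lemma poly_apply_linear_factor:
  "poly_apply scale T ([:-r, 1:] * p) y = poly_apply scale T p (T y - r *s y)"
proof -
  have "[:-r, 1:] * p = pCons 0 p + smult (-r) p"
    by simp
  then have "poly_apply scale T ([:-r, 1:] * p) y =
      poly_apply scale T p (T y) - r *s poly_apply scale T p y"
    by (simp only: poly_apply_add poly_apply_smult poly_apply_pCons_0) (simp add: scale_minus_left)
  also have "\<dots> = poly_apply scale T p (T y - r *s y)"
    by (simp add: poly_apply_def funpow_linear_diff funpow_linear_scale
        scale_right_diff_distrib sum_subtractf scale_sum_right mult.commute)
  finally show ?thesis .
qed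

end

end

context
  fixes sc :: "complex \<Rightarrow> 'b::ab_group_add \<Rightarrow> 'b"
    and T :: "'b \<Rightarrow> 'b"
    and W :: "'b set"
  assumes vector_space: "vector_space sc"
    and T_add: "\<And>u w. T (u + w) = T u + T w"
    and T_scale: "\<And>c u. T (sc c u) = sc c (T u)"
    and subspace: "module.subspace sc W"
    and invariant: "\<forall>y\<in>W. T y \<in> W"
begin

interpretation vector_space sc
  by (fact vector_space)

lemma eigenvector_of_annihilating_poly:
  "p \<noteq> 0 \<Longrightarrow> y \<in> W \<Longrightarrow> y \<noteq> 0 \<Longrightarrow> poly_apply sc T p y = 0 \<Longrightarrow>
    \<exists>x\<in>W. x \<noteq> 0 \<and> (\<exists>\<mu>. T x = sc \<mu> x)"
proof (induction "degree p" arbitrary: p y rule: less_induct)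
  case less
  show ?case
  proof (cases "degree p = 0")
    case True
    then have "coeff p 0 \<noteq> 0"
      using less.prems(1) leading_coeff_0_iff by metis
    moreover have "sc (coeff p 0) y = 0"
      using True less.prems(4) by (simp add: poly_apply_def)
    ultimately show ?thesis
      using less.prems(3) by simp
  next
    case False
    then have "\<not> constant (poly p)"
      by (simp add: constant_degree)
    then obtain z where "poly p z = 0"
      using fundamental_theorem_of_algebra by blast
    then obtain q where p: "p = [:-z, 1:] * q"
      using poly_eq_0_iff_dvd by blast
    then have "q \<noteq> 0"
      using less.prems(1) by auto
    then have "degree q < degree p"
      unfolding p by (subst degree_mult_eq) auto
    (* Either y is an eigenvector for the root z, or T y - z y is a nonzero vector of W
       annihilated by the cofactor q, which has smaller degree. *)
    show ?thesis
    proof (cases "T y - sc z y = 0")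
      case True
      then have "T y = sc z y"
        by simp
      then show ?thesis
        using less.prems(2,3) by blast
    next
      case False
      have "T y - sc z y \<in> W"
        using invariant less.prems(2)
        by (intro subspace_diff[OF subspace] subspace_scale[OF subspace]) auto
      moreover have "poly_apply sc T q (T y - sc z y) = 0"
        using less.prems(4) unfolding p poly_apply_linear_factor[OF T_add T_scale] .
      ultimately show ?thesis
        using less.hyps[OF \<open>degree q < degree p\<close> \<open>q \<noteq> 0\<close>] False by simp
    qed
  qed
qed

lemma exists_eigenvector:
  assumes "W \<subseteq> span B" "finite B" "y \<in> W" "y \<noteq> 0"
  obtains x \<mu> where "x \<in> W" "x \<noteq> 0" "T x = sc \<mu> x"
proof -
  have "(T ^^ k) y \<in> W" for k
    using invariant assms(3) by (induction k) auto
  then have "(T ^^ k) y \<in> span B" for k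
    using assms(1) by blast
  then obtain p where "p \<noteq> 0" "poly_apply sc T p y = 0"
    using exists_annihilating_poly assms(2) by metis
  then have "\<exists>x\<in>W. x \<noteq> 0 \<and> (\<exists>\<mu>. T x = sc \<mu> x)"
    using eigenvector_of_annihilating_poly assms(3,4) by simp
  then show ?thesis
    using that by (elim bexE conjE exE)
qed

end

lemma sum_UNIV_eq_single:
  fixes f :: "'n::finite \<Rightarrow> 'a::comm_monoid_add"
  assumes "\<And>k. k \<noteq> a \<Longrightarrow> f k = 0"
  shows "(\<Sum>k\<in>UNIV. f k) = f a"
  using assms by (subst sum.remove[of UNIV a]) (auto intro: sum.neutral)

lemma mat_add: "mat (a + b) = (mat a + mat b :: 'a::semiring_1^'n^'n)"
  by (simp add: vec_eq_iff mat_def)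

lemma mat_mult_component: "(mat c ** A) $ i $ j = c * A $ i $ j"
  for A :: "'a::semiring_1^'n^'m"
  unfolding matrix_matrix_mult_def vec_lambda_beta
  by (subst sum_UNIV_eq_single[where a = i]) (auto simp: mat_def)

lemma mult_mat_component: "(A ** mat c) $ i $ j = A $ i $ j * c"
  for A :: "'a::semiring_1^'n^'m"
  unfolding matrix_matrix_mult_def vec_lambda_beta
  by (subst sum_UNIV_eq_single[where a = j]) (auto simp: mat_def)

lemma mat_mult_mat: "mat a ** mat b = (mat (a * b) :: 'a::semiring_1^'n^'n)"
  unfolding vec_eq_iff mat_mult_component by (simp add: mat_def)

lemma mat_mult_commute: "mat c ** A = A ** (mat c :: 'a::comm_semiring_1^'n^'n)"
  by (simp add: vec_eq_iff mat_mult_component mult_mat_component mult.commute)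

lemma cstar_cstar [simp]: "cstar (cstar a) = a"
  by (simp add: cstar_def vec_eq_iff)

lemma cstar_mult: "cstar (a ** b) = cstar b ** cstar a"
  by (simp add: cstar_def vec_eq_iff matrix_matrix_mult_def mult.commute)

lemma cstar_diff: "cstar (a - b) = cstar a - cstar b"
  by (simp add: cstar_def vec_eq_iff)

lemma cstar_0 [simp]: "cstar 0 = 0"
  by (simp add: cstar_def vec_eq_iff)

lemma cstar_mat: "cstar (mat c) = mat (cnj c)"
  by (simp add: cstar_def vec_eq_iff mat_def)

definition matrix_unit :: "'n \<Rightarrow> 'n \<Rightarrow> 'a::zero_neq_one^'n^'n" where
  "matrix_unit r s = (\<chi> i j. if r = i then if s = j then 1 else 0 else 0)"

lemma matrix_unit_component:
  "matrix_unit r s $ i $ j = (if r = i then if s = j then 1 else 0 else 0)"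
  by (simp add: matrix_unit_def)

lemma matrix_unit_neq_0: "matrix_unit i j \<noteq> 0"
  by (auto simp: vec_eq_iff matrix_unit_component)

lemma matrix_unit_mult_component:
  "(matrix_unit r s ** A) $ i $ j = (if i = r then A $ s $ j else 0)"
  for A :: "'a::semiring_1^'n^'n"
  unfolding matrix_matrix_mult_def vec_lambda_beta
  by (subst sum_UNIV_eq_single[where a = s]) (auto simp: matrix_unit_component)

lemma mult_matrix_unit_component:
  "(A ** matrix_unit r s) $ i $ j = (if j = s then A $ i $ r else 0)"
  for A :: "'a::semiring_1^'n^'n"
  unfolding matrix_matrix_mult_def vec_lambda_beta
  by (subst sum_UNIV_eq_single[where a = r]) (auto simp: matrix_unit_component)

lemma matrix_eq_sum_matrix_unit:
  "A = (\<Sum>r\<in>UNIV. \<Sum>s\<in>UNIV. mat (A $ r $ s) ** matrix_unit r s)"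
  for A :: "'a::semiring_1^'n^'n"
proof -
  have "(mat (A $ r $ s) ** matrix_unit r s) $ i $ j =
      (if s = j then if r = i then A $ r $ s else 0 else 0)" for r s i j
    by (simp add: mat_mult_component matrix_unit_component)
  then show ?thesis
    by (simp add: vec_eq_iff sum_component)
qed

lemma mat_1_eq_sum_matrix_unit: "mat 1 = (\<Sum>r\<in>UNIV. matrix_unit r r :: 'a::semiring_1^'n^'n)"
  by (simp add: vec_eq_iff sum_component matrix_unit_component mat_def)

lemma trace_matrix_unit_mult: "trace (matrix_unit j i ** A) = A $ i $ j"
  for A :: "'a::semiring_1^'n^'n"
  by (simp add: trace_def matrix_unit_mult_component)

lemma matrix_eq_if_trace_mult_eq:
  fixes X Y :: "'a::semiring_1^'n^'n"
  assumes "\<And>A. trace (A ** X) = trace (A ** Y)"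
  shows "X = Y"
  using assms[of "matrix_unit _ _"] by (simp add: vec_eq_iff trace_matrix_unit_mult)

lemma matrix_unit_sandwich:
  "matrix_unit i i ** A ** matrix_unit i i = mat (A $ i $ i) ** matrix_unit i i"
  for A :: "'a::semiring_1^'n^'n"
  by (simp add: vec_eq_iff mult_matrix_unit_component matrix_unit_mult_component
      mat_def matrix_unit_component)

lemma matrix_unit_idem:
  "matrix_unit i i ** matrix_unit i i = (matrix_unit i i :: 'a::semiring_1^'n^'n)"
  by (simp add: vec_eq_iff matrix_unit_mult_component matrix_unit_component)

lemma cstar_matrix_unit: "cstar (matrix_unit i j) = matrix_unit j i"
  by (auto simp: vec_eq_iff cstar_def matrix_unit_component)

lemma mat_pos_diagonal:
  assumes "mat_pos A"
  obtains r where "r \<ge> 0" "A $ i $ i = of_real r"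
proof -
  have "(A *v axis i 1) $ i = A $ i $ i"
    unfolding matrix_vector_mult_def vec_lambda_beta
    by (subst sum_UNIV_eq_single[where a = i]) (auto simp: axis_def)
  then have "(\<Sum>k\<in>UNIV. cnj (axis i 1 $ k) * (A *v axis i 1) $ k) = A $ i $ i"
    by (subst sum_UNIV_eq_single[where a = i]) (auto simp: axis_def)
  then have "Im (A $ i $ i) = 0" "Re (A $ i $ i) \<ge> 0"
    using assms[unfolded mat_pos_def, rule_format, of "axis i 1"] by simp_all
  then show ?thesis
    using that[of "Re (A $ i $ i)"] by (simp add: complex_eq_iff)
qed

lemma minimal_projection_matrix_unit: "minimal_projection (matrix_unit i i)"
  unfolding minimal_projection_def mat_projection_def
proof (intro conjI allI impI matrix_unit_idem cstar_matrix_unit matrix_unit_neq_0)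
  fix q
  assume q: "(q ** q = q \<and> cstar q = q) \<and> q ** matrix_unit i i = q"
  then have left: "matrix_unit i i ** q = q"
    by (metis cstar_matrix_unit cstar_mult)
  then have q_eq: "q = mat (q $ i $ i) ** matrix_unit i i"
    using q matrix_unit_sandwich[of i q] by (metis matrix_mul_assoc)
  have "mat (q $ i $ i) ** q = q"
    using q left by (metis q_eq matrix_mul_assoc)
  then have "q $ i $ i * q $ i $ i = q $ i $ i"
    by (metis mat_mult_component)
  then have "q $ i $ i = 0 \<or> q $ i $ i = 1"
    by (metis mult_cancel_right1 mult_zero_right)
  then show "q = 0 \<or> q = matrix_unit i i"
    using q_eq by auto
qed

locale matrix_hilbert_module =
  fixes act :: "complex^'d^'d \<Rightarrow> 'h::ab_group_add \<Rightarrow> 'h"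
    and ip :: "'h \<Rightarrow> 'h \<Rightarrow> complex^'d^'d"
  assumes hilbert_module: "hilbert_module act ip"
begin

lemma
  shows act_mult: "act (a ** b) f = act a (act b f)"
    and act_add_left: "act (a + b) f = act a f + act b f"
    and act_add_right: "act a (f + g) = act a f + act a g"
    and act_one: "act (mat 1) f = f"
    and ip_add_left: "ip (f + g) h = ip f h + ip g h"
    and ip_act_left: "ip (act a f) g = a ** ip f g"
    and ip_swap: "ip g f = cstar (ip f g)"
    and ip_self_pos: "mat_pos (ip f f)"
    and ip_self_eq_0_iff: "ip f f = 0 \<longleftrightarrow> f = 0"
  using hilbert_module unfolding hilbert_module_def by (elim conjE, iprover)+

lemma act_0_left [simp]: "act 0 f = 0"
  using act_add_left[of 0 0 f] by simp

lemma act_sum_left: "act (\<Sum>k\<in>K. a k) f = (\<Sum>k\<in>K. act (a k) f)"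
  by (induction K rule: infinite_finite_induct) (auto simp: act_add_left)

lemma act_sum_right: "act a (\<Sum>k\<in>K. f k) = (\<Sum>k\<in>K. act a (f k))"
  using act_add_right[of a 0 0]
  by (induction K rule: infinite_finite_induct) (auto simp: act_add_right)

lemma act_mat_commute: "act (mat c) (act a f) = act a (act (mat c) f)"
  by (simp add: act_mult[symmetric] mat_mult_commute)

lemma ip_0_left [simp]: "ip 0 g = 0"
  using ip_add_left[of 0 0 g] by simp

lemma ip_diff_left: "ip (f - g) h = ip f h - ip g h"
  using ip_add_left[of "f - g" g h] by (simp add: algebra_simps)

lemma ip_diff_right: "ip h (f - g) = ip h f - ip h g"
  by (metis ip_swap ip_diff_left cstar_diff)

lemma ip_act_right: "ip f (act a g) = ip f g ** cstar a"
  by (metis ip_swap ip_act_left cstar_mult cstar_cstar)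

lemma ip_eqI:
  assumes "\<And>g. ip f g = ip f' g"
  shows "f = f'"
  using assms[of "f - f'"] ip_self_eq_0_iff[of "f - f'"] by (simp add: ip_diff_left)

definition sc :: "complex \<Rightarrow> 'h \<Rightarrow> 'h" where
  "sc c f = act (mat c) f"

sublocale vs: vector_space sc
  by unfold_locales
    (simp_all add: sc_def act_add_right act_add_left mat_add act_mult[symmetric] mat_mult_mat
      act_one)

definition submodule :: "'h set \<Rightarrow> bool" where
  "submodule W \<longleftrightarrow>
    0 \<in> W \<and> (\<forall>x\<in>W. \<forall>y\<in>W. x + y \<in> W) \<and> (\<forall>a. \<forall>x\<in>W. act a x \<in> W)"

lemma submodule_subspace: "submodule W \<Longrightarrow> vs.subspace W"
  unfolding submodule_def vs.subspace_def sc_def by blast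

lemma submodule_act: "submodule W \<Longrightarrow> x \<in> W \<Longrightarrow> act a x \<in> W"
  unfolding submodule_def by blast

lemma submodule_orthogonal: "submodule W \<Longrightarrow> submodule {y \<in> W. ip y f = 0}"
  unfolding submodule_def by (auto simp: ip_add_left ip_act_left)

lemma act_ip_self:
  assumes "mat_projection (ip f f)"
  shows "act (ip f f) f = f"
proof -
  have p: "ip f f ** ip f f = ip f f" "cstar (ip f f) = ip f f"
    using assms by (simp_all add: mat_projection_def)
  have "ip (f - act (ip f f) f) (f - act (ip f f) f) = 0"
    using p by (simp add: ip_diff_left ip_diff_right ip_act_left ip_act_right)
  then show ?thesis
    using ip_self_eq_0_iff by simp
qed

lemma ip_mult_ip_self:
  assumes "mat_projection (ip f f)"
  shows "ip h f ** ip f f = ip h f"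
  by (metis act_ip_self[OF assms] assms ip_act_right mat_projection_def)

lemma exists_act_minimal_projection:
  assumes "f \<noteq> 0"
  obtains a where "minimal_projection (ip (act a f) (act a f))"
proof -
  have compress: "ip (act (matrix_unit i i) f) (act (matrix_unit i i) f) =
      mat (ip f f $ i $ i) ** matrix_unit i i" for i
    by (simp add: ip_act_left ip_act_right cstar_matrix_unit matrix_mul_assoc matrix_unit_sandwich)
  have "\<exists>i. ip f f $ i $ i \<noteq> 0"
  proof (rule ccontr)
    assume "\<nexists>i. ip f f $ i $ i \<noteq> 0"
    then have "act (matrix_unit i i) f = 0" for i
      using compress[of i] ip_self_eq_0_iff by simp
    then have "act (mat 1) f = 0"
      by (simp add: mat_1_eq_sum_matrix_unit act_sum_left)
    then show False
      using assms act_one by simp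
  qed
  then obtain i where i: "ip f f $ i $ i \<noteq> 0"
    by blast
  obtain r where r: "r \<ge> 0" "ip f f $ i $ i = of_real r"
    using mat_pos_diagonal[OF ip_self_pos] by blast
  define c where "c = complex_of_real (1 / sqrt r)"
  have c: "c * (c * ip f f $ i $ i) = 1" "cstar (mat c) = mat c"
    using r i by (simp_all add: c_def cstar_mat field_simps flip: of_real_mult)
  let ?f = "act (matrix_unit i i) f"
  have "ip (act (mat c) ?f) (act (mat c) ?f) = mat c ** ip ?f ?f ** cstar (mat c)"
    by (simp only: ip_act_left[of "mat c"] ip_act_right[of _ "mat c"])
  also have "\<dots> = mat c ** (mat (ip f f $ i $ i) ** matrix_unit i i) ** mat c"
    by (simp only: compress c(2))
  also have "\<dots> = mat (c * (c * ip f f $ i $ i)) ** matrix_unit i i"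
    by (simp only: mat_mult_commute[where c = c, symmetric] matrix_mul_assoc mat_mult_mat)
  finally have "ip (act (mat c) ?f) (act (mat c) ?f) = matrix_unit i i"
    by (simp add: c(1))
  then have "minimal_projection (ip (act (mat c ** matrix_unit i i) f)
      (act (mat c ** matrix_unit i i) f))"
    by (simp add: act_mult minimal_projection_matrix_unit)
  then show ?thesis
    by (rule that)
qed

definition selfadjoint :: "('h \<Rightarrow> 'h) \<Rightarrow> bool" where
  "selfadjoint S \<longleftrightarrow> (\<forall>h g. ip (S h) g = ip h (S g))"

lemma selfadjoint_add:
  assumes "selfadjoint S"
  shows "S (u + w) = S u + S w"
  by (rule ip_eqI) (use assms in \<open>simp add: selfadjoint_def ip_add_left\<close>)

lemma selfadjoint_act:
  assumes "selfadjoint S"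
  shows "S (act a h) = act a (S h)"
  by (rule ip_eqI) (use assms in \<open>simp add: selfadjoint_def ip_act_left\<close>)

lemma selfadjoint_eigenvalue_real:
  assumes "selfadjoint S" "S x = act (mat \<mu>) x" "x \<noteq> 0"
  shows "\<mu> \<in> \<real>"
proof -
  have "mat \<mu> ** ip x x = ip x x ** cstar (mat \<mu>)"
    using assms(1,2) unfolding selfadjoint_def by (metis ip_act_left ip_act_right)
  then have eq: "mat \<mu> ** ip x x = mat (cnj \<mu>) ** ip x x"
    by (simp add: cstar_mat mat_mult_commute)
  have "ip x x \<noteq> 0"
    using assms(3) ip_self_eq_0_iff by simp
  then obtain r s where "ip x x $ r $ s \<noteq> 0"
    by (metis vec_eq_iff zero_index)
  moreover have "\<mu> * ip x x $ r $ s = cnj \<mu> * ip x x $ r $ s"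
    using arg_cong[OF eq, of "\<lambda>m. m $ r $ s"] by (simp add: mat_mult_component)
  ultimately show ?thesis
    using Reals_cnj_iff by force
qed

lemma selfadjoint_deflate:
  fixes \<mu> :: real
  assumes "selfadjoint S" "S f = act (mat \<mu>) f" "mat_projection (ip f f)"
  defines "S' \<equiv> \<lambda>h. S h - act (mat \<mu>) (odot act ip f f h)"
  shows "selfadjoint S'" and "ip (S' h) f = 0"
proof -
  have cstar_mu: "cstar (mat (of_real \<mu>)) = mat (of_real \<mu>)"
    by (simp add: cstar_mat)
  have "ip (act (mat \<mu>) (odot act ip f f h)) g = mat \<mu> ** (ip h f ** ip f g)" for h g
    by (simp add: odot_def ip_act_left)
  moreover have "ip h (act (mat \<mu>) (odot act ip f f g)) = (ip h f ** ip f g) ** mat \<mu>" for h g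
    by (simp add: odot_def ip_act_right cstar_mu ip_swap[of f g, symmetric])
  ultimately have
    "ip (act (mat \<mu>) (odot act ip f f h)) g = ip h (act (mat \<mu>) (odot act ip f f g))" for h g
    by (simp add: mat_mult_commute)
  with assms(1) show "selfadjoint S'"
    by (simp add: selfadjoint_def S'_def ip_diff_left ip_diff_right)
  have "ip (S' h) f = ip h f ** mat \<mu> - mat \<mu> ** (ip h f ** ip f f)"
    using assms(1,2)
    by (simp add: S'_def selfadjoint_def odot_def ip_diff_left ip_act_left ip_act_right cstar_mu)
  then show "ip (S' h) f = 0"
    by (simp add: ip_mult_ip_self[OF assms(3)] mat_mult_commute)
qed

lemma submodule_deflate:
  assumes "submodule W" "f \<in> W" "x \<in> W"
  shows "x - act (mat c) (odot act ip f f h) \<in> W"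
  using assms vs.subspace_diff[OF submodule_subspace[OF assms(1)]]
  by (simp add: odot_def submodule_act act_mult[symmetric])

lemma exists_normalized_eigenvector:
  assumes "submodule W" "W \<subseteq> vs.span B" "finite B" "selfadjoint S" "\<forall>h\<in>W. S h \<in> W"
    and "y \<in> W" "y \<noteq> 0"
  obtains f and \<mu> :: real
  where "f \<in> W" "minimal_projection (ip f f)" "S f = act (mat \<mu>) f"
proof -
  obtain x \<mu> where x: "x \<in> W" "x \<noteq> 0" "S x = act (mat \<mu>) x"
    using exists_eigenvector[OF vs.vector_space_axioms _ _ submodule_subspace[OF assms(1)]
        assms(5) assms(2,3,6,7)] selfadjoint_add[OF assms(4)] selfadjoint_act[OF assms(4)]
    unfolding sc_def by metis
  obtain r :: real where r: "\<mu> = of_real r"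
    using selfadjoint_eigenvalue_real[OF assms(4) x(3,2)] Reals_cases by metis
  obtain a where a: "minimal_projection (ip (act a x) (act a x))"
    using exists_act_minimal_projection[OF x(2)] by blast
  have "S (act a x) = act (mat r) (act a x)"
    using x(3) r by (simp add: selfadjoint_act[OF assms(4)] act_mat_commute)
  then show ?thesis
    using that submodule_act[OF assms(1) x(1)] a by blast
qed

definition spectral_sum :: "nat \<Rightarrow> (nat \<Rightarrow> real) \<Rightarrow> (nat \<Rightarrow> 'h) \<Rightarrow> 'h \<Rightarrow> 'h" where
  "spectral_sum n l f h = (\<Sum>k<n. act (mat (of_real (l k))) (odot act ip (f k) (f k) h))"

lemma spectral_sum_Suc:
  "spectral_sum (Suc n) (l(n := \<mu>)) (f(n := g)) h =
    spectral_sum n l f h + act (mat (of_real \<mu>)) (odot act ip g g h)"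
  unfolding spectral_sum_def sum.lessThan_Suc by (auto intro!: sum.cong)

lemma modular_orthonormal_extend:
  assumes "modular_orthonormal ip n f" "\<forall>k<n. ip (f k) g = 0" "minimal_projection (ip g g)"
  shows "modular_orthonormal ip (Suc n) (f(n := g))"
proof -
  have "ip g (f k) = 0" if "k < n" for k
    using assms(2) that ip_swap[of g "f k"] by simp
  then show ?thesis
    using assms by (auto simp: modular_orthonormal_def less_Suc_eq)
qed

lemma dim_orthogonal_less:
  assumes "submodule W" "W \<subseteq> vs.span B" "finite B" "f \<in> W" "f \<noteq> 0"
  shows "vs.dim {y \<in> W. ip y f = 0} < vs.dim W"
proof (rule vs.dim_psubset_of_finite_span)
  show "vs.subspace {y \<in> W. ip y f = 0}"
    using assms(1) by (intro submodule_subspace submodule_orthogonal)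
  show "{y \<in> W. ip y f = 0} \<subset> W"
    using assms(4,5) ip_self_eq_0_iff by auto
qed (use assms(2,3) in auto)

lemma selfadjoint_spectral_sum:
  assumes "submodule W" "W \<subseteq> vs.span B" "finite B" "selfadjoint S" "\<forall>h. S h \<in> W"
  shows "\<exists>n l f. modular_orthonormal ip n f \<and> (\<forall>k<n. f k \<in> W) \<and> S = spectral_sum n l f"
  using assms(1,2,4,5)
proof (induction "vs.dim W" arbitrary: W S rule: less_induct)
  case less
  show ?case
  proof (cases "W \<subseteq> {0}")
    case True
    then have "S = spectral_sum 0 l f" for l f
      using less.prems(4) by (auto simp: spectral_sum_def fun_eq_iff)
    moreover have "modular_orthonormal ip 0 f" for f
      by (simp add: modular_orthonormal_def)
    ultimately show ?thesis
      by blast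
  next
    case False
    then obtain f and \<mu> :: real
      where f: "f \<in> W" "minimal_projection (ip f f)" "S f = act (mat \<mu>) f"
      using exists_normalized_eigenvector[OF less.prems(1,2) assms(3) less.prems(3)] less.prems(4)
      by blast
    then have "mat_projection (ip f f)" "f \<noteq> 0"
      by (auto simp: minimal_projection_def)
    define S' where "S' h = S h - act (mat \<mu>) (odot act ip f f h)" for h
    define W' where "W' = {y \<in> W. ip y f = 0}"
    have S': "selfadjoint S'" "ip (S' h) f = 0" for h
      unfolding S'_def
      by (rule selfadjoint_deflate[OF less.prems(3) f(3) \<open>mat_projection (ip f f)\<close>])+
    have S'_W': "\<forall>h. S' h \<in> W'"
      using submodule_deflate[OF less.prems(1) f(1)] less.prems(4) S'(2)
      by (simp add: W'_def S'_def)
    have W': "submodule W'" "W' \<subseteq> vs.span B"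
      unfolding W'_def using submodule_orthogonal[OF less.prems(1)] less.prems(2) by auto
    have "vs.dim W' < vs.dim W"
      unfolding W'_def using dim_orthogonal_less less.prems(1,2) assms(3) f(1) \<open>f \<noteq> 0\<close> .
    then obtain n l fs
      where IH: "modular_orthonormal ip n fs" "\<forall>k<n. fs k \<in> W'" "S' = spectral_sum n l fs"
      using less.hyps[OF _ W' S'(1) S'_W'] by blast
    have "modular_orthonormal ip (Suc n) (fs(n := f))"
      using modular_orthonormal_extend[OF IH(1) _ f(2)] IH(2) by (simp add: W'_def)
    moreover have "\<forall>k<Suc n. (fs(n := f)) k \<in> W"
      using IH(2) f(1) by (simp add: W'_def less_Suc_eq)
    moreover have "S = spectral_sum (Suc n) (l(n := \<mu>)) (fs(n := f))"
      by (simp add: fun_eq_iff spectral_sum_Suc IH(3)[symmetric] S'_def)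
    ultimately show ?thesis
      by blast
  qed
qed

definition generated_submodule :: "nat \<Rightarrow> (nat \<Rightarrow> 'h) \<Rightarrow> 'h set" where
  "generated_submodule n g = range (\<lambda>a. \<Sum>k<n. act (a k) (g k))"

lemma submodule_generated_submodule: "submodule (generated_submodule n g)"
  unfolding submodule_def generated_submodule_def
proof (intro conjI ballI allI)
  show "0 \<in> range (\<lambda>a. \<Sum>k<n. act (a k) (g k))"
    by (rule range_eqI[of _ _ "\<lambda>_. 0"]) simp
next
  fix x y
  assume "x \<in> range (\<lambda>a. \<Sum>k<n. act (a k) (g k))" "y \<in> range (\<lambda>a. \<Sum>k<n. act (a k) (g k))"
  then obtain a b where "x = (\<Sum>k<n. act (a k) (g k))" "y = (\<Sum>k<n. act (b k) (g k))"
    by blast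
  then show "x + y \<in> range (\<lambda>a. \<Sum>k<n. act (a k) (g k))"
    by (intro range_eqI[of _ _ "\<lambda>k. a k + b k"]) (simp add: act_add_left sum.distrib)
next
  fix c x
  assume "x \<in> range (\<lambda>a. \<Sum>k<n. act (a k) (g k))"
  then obtain a where "x = (\<Sum>k<n. act (a k) (g k))"
    by blast
  then show "act c x \<in> range (\<lambda>a. \<Sum>k<n. act (a k) (g k))"
    by (intro range_eqI[of _ _ "\<lambda>k. c ** a k"]) (simp add: act_sum_right act_mult)
qed

lemma generated_submodule_finite_span:
  obtains B where "finite B" "generated_submodule n g \<subseteq> vs.span B"
proof
  let ?B = "(\<lambda>(r, s, k). act (matrix_unit r s) (g k)) ` (UNIV \<times> UNIV \<times> {..<n})"
  show "finite ?B"
    by simp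
  have "act a (g k) \<in> vs.span ?B" if "k < n" for a k
  proof -
    have "act a (g k) =
        (\<Sum>r\<in>UNIV. \<Sum>s\<in>UNIV. sc (a $ r $ s) (act (matrix_unit r s) (g k)))"
      by (subst matrix_eq_sum_matrix_unit) (simp add: act_sum_left sc_def act_mult)
    also have "\<dots> \<in> vs.span ?B"
      using that by (intro vs.span_sum vs.span_scale vs.span_base) force
    finally show ?thesis .
  qed
  then show "generated_submodule n g \<subseteq> vs.span ?B"
    unfolding generated_submodule_def by (auto intro: vs.span_sum)
qed

lemma finite_rank_ops_selfadjoint:
  assumes "S \<in> finite_rank_ops act ip" "\<forall>h g. trace (ip (S h) g) = trace (ip h (S g))"
  shows "selfadjoint S"
proof -
  have S_act: "S (act a h) = act a (S h)" for a h
    using assms(1)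
    by (auto simp: finite_rank_ops_def odot_def ip_act_left act_mult act_sum_right)
  have "ip (S h) g = ip h (S g)" for h g
  proof (rule matrix_eq_if_trace_mult_eq)
    fix a
    have "trace (a ** ip (S h) g) = trace (ip (S (act a h)) g)"
      by (simp add: S_act ip_act_left)
    also have "\<dots> = trace (ip (act a h) (S g))"
      using assms(2) by blast
    finally show "trace (a ** ip (S h) g) = trace (a ** ip h (S g))"
      by (simp add: ip_act_left)
  qed
  then show ?thesis
    by (simp add: selfadjoint_def)
qed

end

theorem lemma2:
  fixes act :: "complex^'d^'d \<Rightarrow> 'h::ab_group_add \<Rightarrow> 'h"
    and ip :: "'h \<Rightarrow> 'h \<Rightarrow> complex^'d^'d"
    and S :: "'h \<Rightarrow> 'h"
  assumes "hilbert_module act ip"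
    and "S \<in> finite_rank_ops act ip"
    and "\<forall>h g. trace (ip (S h) g) = trace (ip h (S g))"
  shows "\<exists>(n::nat) (l::nat \<Rightarrow> real) (f::nat \<Rightarrow> 'h).
           modular_orthonormal ip n f \<and>
           S = (\<lambda>h. \<Sum>k<n. act (mat (complex_of_real (l k))) (odot act ip (f k) (f k) h))"
proof -
  interpret matrix_hilbert_module act ip
    by (rule matrix_hilbert_module.intro) (fact assms(1))
  obtain n :: nat and fs gs where S: "S = (\<lambda>h. \<Sum>k<n. odot act ip (fs k) (gs k) h)"
    using assms(2) unfolding finite_rank_ops_def by blast
  have "S h \<in> generated_submodule n fs" for h
    unfolding S odot_def generated_submodule_def
    by (rule range_eqI[of _ _ "\<lambda>k. ip h (gs k)"]) simp
  moreover obtain B where "finite B" "generated_submodule n fs \<subseteq> vs.span B"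
    by (rule generated_submodule_finite_span)
  ultimately obtain m l f where "modular_orthonormal ip m f" "S = spectral_sum m l f"
    using selfadjoint_spectral_sum[OF submodule_generated_submodule _ _
        finite_rank_ops_selfadjoint[OF assms(2,3)]] by blast
  then show ?thesis
    unfolding spectral_sum_def by blast
qed

end
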